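(* Let $n\ge2$ and let $G\subsetneq\mathbb{R}^n$ be a domain. Then $G$ is convex if and only if $s_G(x,y)\le p_G(x,y)$ for all $x,y\in G$.
   Context: A domain is a non-empty, open, connected set. $d_G(x)=\inf\{|x-z|:z\in\partial G\}$, $s_G(x,y)=\frac{|x-y|}{\inf_{z\in\partial G}(|x-z|+|z-y|)}$, $p_G(x,y)=\frac{|x-y|}{\sqrt{|x-y|^2+4d_G(x)d_G(y)}}$. *)

theory Defs
  imports "HOL-Analysis.Analysis"
begin

definition bdist :: "'a::euclidean_space set \<Rightarrow> 'a \<Rightarrow> real" where
  "bdist G x = (INF z\<in>frontier G. dist x z)"

definition s_metric :: "'a::euclidean_space set \<Rightarrow> 'a \<Rightarrow> 'a \<Rightarrow> real" where
  "s_metric G x y = dist x y / (INF z\<in>frontier G. dist x z + dist z y)"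

definition p_metric :: "'a::euclidean_space set \<Rightarrow> 'a \<Rightarrow> 'a \<Rightarrow> real" where
  "p_metric G x y = dist x y / sqrt ((dist x y)\<^sup>2 + 4 * bdist G x * bdist G y)"

end

theory Submission
  imports Defs
begin

(* If G is convex and z is a boundary point, a supporting half-space at z contains G, so
   d_G(x) and d_G(y) are bounded by the heights of x and y above the supporting hyperplane;
   Cauchy-Schwarz against the reflection of y - z in that hyperplane then gives
   |x - y|^2 + 4 d_G(x) d_G(y) \<le> (|x - z| + |z - y|)^2, i.e. s_G \<le> p_G.
   If G is not convex, some segment [x, y] with x, y in G meets the boundary, so s_G(x, y) = 1,
   whereas p_G(x, y) < 1 because d_G is positive on the open set G. *)

lemma bdist_nonneg:
  fixes G :: "'a::euclidean_space set"
  assumes "frontier G \<noteq> {}"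
  shows "0 \<le> bdist G x"
  unfolding bdist_def using assms by (intro cINF_greatest) auto

lemma bdist_le_dist_frontier:
  fixes G :: "'a::euclidean_space set"
  assumes "z \<in> frontier G"
  shows "bdist G x \<le> dist x z"
  unfolding bdist_def using assms by (intro cINF_lower bdd_belowI[of _ 0]) auto

lemma bdist_le_dist:
  fixes G :: "'a::euclidean_space set"
  assumes "x \<in> G" "y \<notin> G"
  shows "bdist G x \<le> dist x y"
proof -
  obtain w where w: "w \<in> closed_segment x y" "w \<in> frontier G"
    using connected_Int_frontier[of "closed_segment x y" G] assms by auto
  have "bdist G x \<le> dist x w" using w(2) by (rule bdist_le_dist_frontier)
  also have "\<dots> \<le> dist x y" using dist_in_closed_segment[OF w(1)] by (simp add: dist_commute)
  finally show ?thesis .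
qed

lemma bdist_pos:
  fixes G :: "'a::euclidean_space set"
  assumes "open G" "x \<in> G" "frontier G \<noteq> {}"
  shows "0 < bdist G x"
proof -
  obtain e where e: "e > 0" "ball x e \<subseteq> G"
    using assms(1,2) open_contains_ball by blast
  have "e \<le> bdist G x"
    unfolding bdist_def
  proof (rule cINF_greatest[OF assms(3)])
    fix w assume "w \<in> frontier G"
    with \<open>open G\<close> have "w \<notin> ball x e" using e(2) frontier_disjoint_eq by blast
    then show "e \<le> dist x w" by simp
  qed
  with e(1) show ?thesis by simp
qed

lemma bdist_le_INF_dist_add:
  fixes G :: "'a::euclidean_space set"
  assumes "frontier G \<noteq> {}"
  shows "bdist G x \<le> (INF z\<in>frontier G. dist x z + dist z y)"
proof (rule cINF_greatest[OF assms])
  fix z assume "z \<in> frontier G"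
  then have "bdist G x \<le> dist x z" by (rule bdist_le_dist_frontier)
  then show "bdist G x \<le> dist x z + dist z y" by (simp add: add_increasing2)
qed

lemma p_metric_less_one:
  fixes G :: "'a::euclidean_space set"
  assumes "0 < bdist G x" "0 < bdist G y"
  shows "p_metric G x y < 1"
proof -
  have "sqrt ((dist x y)\<^sup>2) < sqrt ((dist x y)\<^sup>2 + 4 * bdist G x * bdist G y)"
    using assms by (intro real_sqrt_less_mono) simp
  then have "dist x y < sqrt ((dist x y)\<^sup>2 + 4 * bdist G x * bdist G y)" by simp
  then show ?thesis
    unfolding p_metric_def using zero_le_dist[of x y] by (subst divide_less_eq_1_pos) linarith+
qed

lemma s_metric_ge_one:
  fixes G :: "'a::euclidean_space set"
  assumes "z \<in> closed_segment x y" "z \<in> frontier G" "0 < bdist G x"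
  shows "1 \<le> s_metric G x y"
proof -
  have "dist x z + dist z y = dist x y"
    using assms(1) by (simp add: between between_mem_segment[symmetric])
  then have "(INF z\<in>frontier G. dist x z + dist z y) \<le> dist x y"
    using assms(2) by (intro cINF_lower2[where x=z] bdd_belowI[of _ 0]) auto
  moreover have "0 < (INF z\<in>frontier G. dist x z + dist z y)"
    using assms(2,3) bdist_le_INF_dist_add[of G x y] by fastforce
  ultimately show ?thesis unfolding s_metric_def by simp
qed

lemma convex_if_s_metric_le_p_metric:
  fixes G :: "'a::euclidean_space set"
  assumes "open G" and s_le_p: "\<forall>x\<in>G. \<forall>y\<in>G. s_metric G x y \<le> p_metric G x y"
  shows "convex G"
proof (rule ccontr)
  assume "\<not> convex G"
  then obtain x y where xy: "x \<in> G" "y \<in> G" and "\<not> closed_segment x y \<subseteq> G"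
    unfolding convex_contains_segment by blast
  then obtain z where z: "z \<in> closed_segment x y" "z \<in> frontier G"
    using connected_Int_frontier[of "closed_segment x y" G] by auto
  then have "0 < bdist G x" "0 < bdist G y"
    using bdist_pos[OF \<open>open G\<close>] xy by blast+
  then have "p_metric G x y < s_metric G x y"
    using p_metric_less_one s_metric_ge_one[OF z] by fastforce
  with s_le_p xy show False by force
qed

(* Cauchy-Schwarz applied to p and the reflection of q in the hyperplane orthogonal to u. *)
lemma inner_reflection_le_norm_mult:
  fixes u p q :: "'a::real_inner"
  assumes "norm u = 1"
  shows "2 * (u \<bullet> p) * (u \<bullet> q) - p \<bullet> q \<le> norm p * norm q"
proof -
  define r where "r = q - (2 * (u \<bullet> q)) *\<^sub>R u"
  have uu: "u \<bullet> u = 1" using assms by (simp add: dot_square_norm)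
  have "r \<bullet> r = q \<bullet> q"
    unfolding r_def by (simp add: algebra_simps inner_commute uu power2_eq_square)
  then have "norm r = norm q" by (simp add: norm_eq_sqrt_inner)
  moreover have "(- p) \<bullet> r = 2 * (u \<bullet> p) * (u \<bullet> q) - p \<bullet> q"
    unfolding r_def by (simp add: algebra_simps inner_commute)
  moreover have "(- p) \<bullet> r \<le> norm (- p) * norm r" by (rule norm_cauchy_schwarz)
  ultimately show ?thesis by simp
qed

lemma sqrt_dist_sq_add_le_dist_add_dist:
  fixes u x y z :: "'a::real_inner"
  assumes "norm u = 1" "0 \<le> A" "0 \<le> B" "A \<le> u \<bullet> (x - z)" "B \<le> u \<bullet> (y - z)"
  shows "sqrt ((dist x y)\<^sup>2 + 4 * A * B) \<le> dist x z + dist z y"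
proof -
  define p where "p = x - z"
  define q where "q = y - z"
  have "A * B \<le> (u \<bullet> p) * (u \<bullet> q)"
    using assms unfolding p_def q_def by (simp add: mult_mono)
  moreover have "(dist x y)\<^sup>2 = p \<bullet> p + q \<bullet> q - 2 * (p \<bullet> q)"
    unfolding p_def q_def dist_norm power2_norm_eq_inner
    by (simp add: algebra_simps inner_commute)
  moreover have "(dist x z + dist z y)\<^sup>2 = p \<bullet> p + q \<bullet> q + 2 * (norm p * norm q)"
    unfolding p_def q_def dist_norm
    by (simp add: power2_sum power2_norm_eq_inner[symmetric] norm_minus_commute)
  ultimately have "(dist x y)\<^sup>2 + 4 * A * B \<le> (dist x z + dist z y)\<^sup>2"
    using inner_reflection_le_norm_mult[OF assms(1), of p q] by linarith
  then show ?thesis by (simp add: real_le_lsqrt)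
qed

lemma open_convex_strict_supporting_halfspace:
  fixes G :: "'a::euclidean_space set"
  assumes "convex G" "open G" "z \<notin> G"
  obtains v where "norm v = 1" "\<And>w. w \<in> G \<Longrightarrow> 0 < v \<bullet> (w - z)"
proof -
  have "convex ((\<lambda>w. w - z) ` G)" "0 \<notin> (\<lambda>w. w - z) ` G"
    using assms(1,3) by (auto intro: convex_translation_subtract)
  then obtain a where "a \<noteq> 0" and a: "\<forall>w\<in>(\<lambda>w. w - z) ` G. 0 \<le> a \<bullet> w"
    using separating_hyperplane_set_0 by blast
  define v where "v = a /\<^sub>R norm a"
  have "norm v = 1" using \<open>a \<noteq> 0\<close> unfolding v_def by simp
  then have vv: "v \<bullet> v = 1" by (simp add: dot_square_norm)
  have ge: "0 \<le> v \<bullet> (w - z)" if "w \<in> G" for w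
    using a that unfolding v_def by auto
  have "0 < v \<bullet> (w - z)" if "w \<in> G" for w
  proof -
    obtain e where e: "e > 0" "ball w e \<subseteq> G"
      using assms(2) \<open>w \<in> G\<close> open_contains_ball by blast
    have "w - (e/2) *\<^sub>R v \<in> G"
      using e \<open>norm v = 1\<close> by (auto simp: dist_norm)
    from ge[OF this] have "e/2 \<le> v \<bullet> (w - z)"
      by (simp add: algebra_simps vv)
    with e(1) show ?thesis by linarith
  qed
  with \<open>norm v = 1\<close> show ?thesis by (rule that)
qed

lemma bdist_le_height_above_halfspace:
  fixes G :: "'a::euclidean_space set"
  assumes "norm v = 1" "\<And>w. w \<in> G \<Longrightarrow> 0 < v \<bullet> (w - z)" "w \<in> G"
  shows "bdist G w \<le> v \<bullet> (w - z)"
proof -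
  define t where "t = v \<bullet> (w - z)"
  have vv: "v \<bullet> v = 1" using assms(1) by (simp add: dot_square_norm)
  have "v \<bullet> ((w - t *\<^sub>R v) - z) = 0"
    unfolding t_def by (simp add: algebra_simps vv)
  then have "w - t *\<^sub>R v \<notin> G" using assms(2) by force
  with assms(3) have "bdist G w \<le> dist w (w - t *\<^sub>R v)" by (rule bdist_le_dist)
  also have "\<dots> = t"
    using assms(1) assms(2)[OF assms(3)] unfolding t_def by (simp add: dist_norm)
  finally show ?thesis unfolding t_def .
qed

lemma s_metric_le_p_metric_if_convex:
  fixes G :: "'a::euclidean_space set"
  assumes "convex G" "open G" "frontier G \<noteq> {}" "x \<in> G" "y \<in> G"
  shows "s_metric G x y \<le> p_metric G x y"
proof -
  define S where "S = sqrt ((dist x y)\<^sup>2 + 4 * bdist G x * bdist G y)"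
  have "0 < S"
    unfolding S_def using bdist_pos[OF assms(2) _ assms(3)] assms(4,5)
    by (intro real_sqrt_gt_zero add_nonneg_pos) auto
  moreover have "S \<le> (INF z\<in>frontier G. dist x z + dist z y)"
  proof (rule cINF_greatest[OF assms(3)])
    fix z assume "z \<in> frontier G"
    then have "z \<notin> G" using assms(2) frontier_disjoint_eq by blast
    then obtain v where v: "norm v = 1" "\<And>w. w \<in> G \<Longrightarrow> 0 < v \<bullet> (w - z)"
      using open_convex_strict_supporting_halfspace assms(1,2) by blast
    show "S \<le> dist x z + dist z y"
      unfolding S_def
      using bdist_le_height_above_halfspace[OF v] assms(4,5) bdist_nonneg[OF assms(3)]
      by (intro sqrt_dist_sq_add_le_dist_add_dist[OF v(1)]) auto
  qed
  ultimately show ?thesis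
    unfolding s_metric_def p_metric_def S_def[symmetric]
    by (intro divide_left_mono) auto
qed

theorem theorem3p7:
  fixes G :: "'a::euclidean_space set"
  assumes "DIM('a) \<ge> 2"
    and "open G" and "connected G" and "G \<noteq> {}" and "G \<noteq> UNIV"
  shows "convex G \<longleftrightarrow> (\<forall>x\<in>G. \<forall>y\<in>G. s_metric G x y \<le> p_metric G x y)"
proof
  assume "convex G"
  moreover have "frontier G \<noteq> {}"
    using \<open>G \<noteq> {}\<close> \<open>G \<noteq> UNIV\<close> by (rule frontier_not_empty)
  ultimately show "\<forall>x\<in>G. \<forall>y\<in>G. s_metric G x y \<le> p_metric G x y"
    using s_metric_le_p_metric_if_convex \<open>open G\<close> by blast
next
  assume "\<forall>x\<in>G. \<forall>y\<in>G. s_metric G x y \<le> p_metric G x y"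
  with \<open>open G\<close> show "convex G" by (rule convex_if_s_metric_le_p_metric)
qed

end
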